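(* Let $d\ge 2$ and let $\{(G_\nu,S_\nu,|\cdot|_\nu)\}_{\nu\in\mathbb{N}}$ be a non-$\ell_1$-expanding similar family of groups of automorphisms of $T_d$. Then for every $\nu\in\mathbb{N}$, $\kappa_\nu\le\kappa_{\nu+1}$.
   Context: $T_d$ is the $d$-regular rooted tree; $\mathrm{Sym}(d)$ acts by rooted automorphisms, and every $g\in\mathrm{Aut}(T_d)$ is uniquely $g=(g_1,\dots,g_d)\tau$ with $\tau\in\mathrm{Sym}(d)$ and $g_i$ the restriction of $g\tau^{-1}$ to the subtree at the $i$-th child of the root. A pseudolength on a finite symmetric generating set $S$ of $G$ is a map $S\to\{0,1\}$; the word pseudonorm is $|g|=\min\{\sum_i|s_i| : g=s_1\cdots s_k,\ s_i\in S\}$; it is proper if the subgroup generated by the length-$0$ generators is finite. A non-$\ell_1$-expanding similar family is a family $\{(G_\nu,S_\nu,|\cdot|_\nu)\}_{\nu\in\mathbb{N}}$ where each $G_\nu\le\mathrm{Aut}(T_d)$ acts transitively on each level, is generated by the finite symmetric set $S_\nu$ and carries a proper word pseudonorm $|\cdot|_\nu$, such that every $g\in G_\nu$ is $g=(g_1,\dots,g_d)\tau$ with $g_i\in G_{\nu+1}$, $\tau\in\mathrm{Sym}(d)$ and $\sum_{i=1}^d|g_i|_{\nu+1}\le|g|_\nu$. $\gamma_\nu(n)=|\{g\in G_\nu : |g|_\nu\le n\}|$ and $\kappa_\nu=\lim_{n\to\infty}\gamma_\nu(n)^{1/n}$ is the exponential growth rate (this limit exists). *)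

theory Defs
  imports "HOL-Analysis.Analysis"
begin

text \<open>Vertices of the d-regular rooted tree T_d: finite words over the alphabet {0..<d};
  the root is the empty word.  Automorphisms are represented as functions on
  nat list that act as the identity outside the vertex set.\<close>

definition tree_vertices :: "nat \<Rightarrow> nat list set" where
  "tree_vertices d = lists {0..<d}"

definition tree_aut :: "nat \<Rightarrow> (nat list \<Rightarrow> nat list) \<Rightarrow> bool" where
  "tree_aut d f \<longleftrightarrow>
     bij_betw f (tree_vertices d) (tree_vertices d) \<and>
     f [] = [] \<and>
     (\<forall>w \<in> tree_vertices d. \<forall>a < d. \<exists>b < d. f (w @ [a]) = f w @ [b]) \<and>
     (\<forall>w. w \<notin> tree_vertices d \<longrightarrow> f w = w)"

definition aut_inv :: "nat \<Rightarrow> (nat list \<Rightarrow> nat list) \<Rightarrow> (nat list \<Rightarrow> nat list)" where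
  "aut_inv d f = (\<lambda>w. if w \<in> tree_vertices d then inv_into (tree_vertices d) f w else w)"

definition prod_word :: "(nat list \<Rightarrow> nat list) list \<Rightarrow> (nat list \<Rightarrow> nat list)" where
  "prod_word xs = foldr (\<circ>) xs id"

definition generated :: "(nat list \<Rightarrow> nat list) set \<Rightarrow> (nat list \<Rightarrow> nat list) set" where
  "generated S = {prod_word xs | xs. xs \<in> lists S}"

definition subgroup_gen :: "nat \<Rightarrow> (nat list \<Rightarrow> nat list) set \<Rightarrow> (nat list \<Rightarrow> nat list) set" where
  "subgroup_gen d A = generated (A \<union> aut_inv d ` A)"

definition word_pnorm :: "(nat list \<Rightarrow> nat list) set \<Rightarrow> ((nat list \<Rightarrow> nat list) \<Rightarrow> nat)
     \<Rightarrow> (nat list \<Rightarrow> nat list) \<Rightarrow> nat" where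
  "word_pnorm S l g = (LEAST n. \<exists>xs \<in> lists S. prod_word xs = g \<and> sum_list (map l xs) = n)"

text \<open>Section of g at the first-level vertex x: w \<mapsto> tail of g(x w).
  For g = (g_1,...,g_d) tau these are exactly the g_i (up to reindexing by tau).\<close>
definition aut_section :: "nat \<Rightarrow> (nat list \<Rightarrow> nat list) \<Rightarrow> nat \<Rightarrow> (nat list \<Rightarrow> nat list)" where
  "aut_section d g x = (\<lambda>w. if w \<in> tree_vertices d then tl (g (x # w)) else w)"

definition level_transitive :: "nat \<Rightarrow> (nat list \<Rightarrow> nat list) set \<Rightarrow> bool" where
  "level_transitive d G \<longleftrightarrow>
     (\<forall>u \<in> tree_vertices d. \<forall>v \<in> tree_vertices d. length u = length v \<longrightarrow> (\<exists>g \<in> G. g u = v))"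

definition non_l1_expanding_similar_family ::
  "nat \<Rightarrow> (nat \<Rightarrow> (nat list \<Rightarrow> nat list) set) \<Rightarrow> (nat \<Rightarrow> (nat list \<Rightarrow> nat list) set)
     \<Rightarrow> (nat \<Rightarrow> (nat list \<Rightarrow> nat list) \<Rightarrow> nat) \<Rightarrow> bool" where
  "non_l1_expanding_similar_family d G S l \<longleftrightarrow>
     (\<forall>\<nu>.
        finite (S \<nu>) \<and> S \<nu> \<subseteq> {f. tree_aut d f} \<and>
        (\<forall>s \<in> S \<nu>. aut_inv d s \<in> S \<nu>) \<and>
        G \<nu> = generated (S \<nu>) \<and>
        level_transitive d (G \<nu>) \<and>
        (\<forall>s \<in> S \<nu>. l \<nu> s \<in> {0, 1}) \<and>
        finite (subgroup_gen d {s \<in> S \<nu>. l \<nu> s = 0}) \<and>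
        (\<forall>g \<in> G \<nu>. (\<forall>x < d. aut_section d g x \<in> G (Suc \<nu>)) \<and>
           (\<Sum>x<d. word_pnorm (S (Suc \<nu>)) (l (Suc \<nu>)) (aut_section d g x))
              \<le> word_pnorm (S \<nu>) (l \<nu>) g))"

definition growth_fun ::
  "(nat \<Rightarrow> (nat list \<Rightarrow> nat list) set) \<Rightarrow> (nat \<Rightarrow> (nat list \<Rightarrow> nat list) set)
     \<Rightarrow> (nat \<Rightarrow> (nat list \<Rightarrow> nat list) \<Rightarrow> nat) \<Rightarrow> nat \<Rightarrow> nat \<Rightarrow> nat" where
  "growth_fun G S l \<nu> n = card {g \<in> G \<nu>. word_pnorm (S \<nu>) (l \<nu>) g \<le> n}"

definition exp_growth_rate ::
  "(nat \<Rightarrow> (nat list \<Rightarrow> nat list) set) \<Rightarrow> (nat \<Rightarrow> (nat list \<Rightarrow> nat list) set)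
     \<Rightarrow> (nat \<Rightarrow> (nat list \<Rightarrow> nat list) \<Rightarrow> nat) \<Rightarrow> nat \<Rightarrow> real" where
  "exp_growth_rate G S l \<nu> = lim (\<lambda>n. root n (real (growth_fun G S l \<nu> n)))"

end

theory Submission
  imports Defs "HOL-Real_Asymp.Real_Asymp"
begin

text \<open>An element \<open>g\<close> of the radius-\<open>n\<close> ball of \<open>G\<^sub>\<nu>\<close> is determined by its permutation of the
  first level (at most \<open>d\<^sup>d\<close> choices) and its sections \<open>g\<^sub>1, \<dots>, g\<^sub>d\<close>, whose norms in
  \<open>G\<^sub>\<nu>\<^sub>+\<^sub>1\<close> sum to at most \<open>n\<close>. If \<open>\<gamma>\<^sub>\<nu>\<^sub>+\<^sub>1(m) \<le> C b\<^sup>m\<close> for some \<open>b > \<kappa>\<^sub>\<nu>\<^sub>+\<^sub>1\<close>, weighting each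
  section \<open>h\<close> by \<open>b\<^bsup>-|h|\<^esup>\<close> bounds the number of admissible tuples by \<open>b\<^sup>n ((n + 1) C)\<^sup>d\<close>, so
  \<open>\<gamma>\<^sub>\<nu>(n) \<le> d\<^sup>d C\<^sup>d (n + 1)\<^sup>d b\<^sup>n\<close> and hence \<open>\<kappa>\<^sub>\<nu> \<le> b\<close>. The growth rates exist by Fekete's lemma, since
  balls of a pseudonorm with values in \<open>{0, 1}\<close> on generators satisfy
  \<open>\<gamma>(m + n) \<le> \<gamma>(m) \<gamma>(n)\<close>.\<close>

definition word_ball ::
  "(nat list \<Rightarrow> nat list) set \<Rightarrow> ((nat list \<Rightarrow> nat list) \<Rightarrow> nat) \<Rightarrow> nat
     \<Rightarrow> (nat list \<Rightarrow> nat list) set" where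
  "word_ball S l n = {prod_word xs | xs. xs \<in> lists S \<and> sum_list (map l xs) \<le> n}"

lemma prod_word_Nil [simp]: "prod_word [] = id"
  by (simp add: prod_word_def)

lemma prod_word_Cons [simp]: "prod_word (x # xs) = x \<circ> prod_word xs"
  by (simp add: prod_word_def)

lemma prod_word_append [simp]: "prod_word (xs @ ys) = prod_word xs \<circ> prod_word ys"
  by (induction xs) auto

lemma generated_mono: "A \<subseteq> B \<Longrightarrow> generated A \<subseteq> generated B"
  unfolding generated_def by (auto dest: lists_mono[THEN subsetD])

lemma word_ball_eq: "{g \<in> generated S. word_pnorm S l g \<le> n} = word_ball S l n"
proof (intro equalityI subsetI)
  fix g assume g: "g \<in> {g \<in> generated S. word_pnorm S l g \<le> n}"
  then obtain xs where "xs \<in> lists S" "prod_word xs = g"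
    unfolding generated_def by auto
  then have "\<exists>m. \<exists>xs \<in> lists S. prod_word xs = g \<and> sum_list (map l xs) = m"
    by auto
  from LeastI_ex[OF this] obtain ys where
    "ys \<in> lists S" "prod_word ys = g" "sum_list (map l ys) = word_pnorm S l g"
    unfolding word_pnorm_def by blast
  with g show "g \<in> word_ball S l n"
    unfolding word_ball_def by auto
next
  fix g assume "g \<in> word_ball S l n"
  then obtain xs where xs: "xs \<in> lists S" "prod_word xs = g" "sum_list (map l xs) \<le> n"
    unfolding word_ball_def by auto
  have "word_pnorm S l g \<le> sum_list (map l xs)"
    unfolding word_pnorm_def by (rule Least_le) (use xs in auto)
  with xs show "g \<in> {g \<in> generated S. word_pnorm S l g \<le> n}"
    unfolding generated_def by auto
qed

lemma word_ball_subset_generated: "word_ball S l n \<subseteq> generated S"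
  unfolding word_ball_def generated_def by auto

lemma word_pnorm_le_if_in_word_ball: "h \<in> word_ball S l n \<Longrightarrow> word_pnorm S l h \<le> n"
  using word_ball_eq[of S l n] by blast

lemma id_in_word_ball: "id \<in> word_ball S l n"
  unfolding word_ball_def by (auto intro!: exI[of _ "[]"])

lemma split_list_by_weight:
  assumes "\<forall>x \<in> set xs. l x \<le> (1::nat)" "sum_list (map l xs) \<le> m + n"
  shows "\<exists>ys zs. xs = ys @ zs \<and> sum_list (map l ys) \<le> m \<and> sum_list (map l zs) \<le> n"
  using assms
proof (induction xs arbitrary: m)
  case Nil
  then show ?case by auto
next
  case (Cons x xs)
  have "l x = 0 \<or> l x = 1" "m = 0 \<or> m > 0"
    using Cons.prems(1) by auto
  then consider "m = 0" | "m > 0" "l x = 0" | "m > 0" "l x = 1"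
    by fastforce
  then show ?case
  proof cases
    case 1
    with Cons.prems show ?thesis by (intro exI[of _ "[]"] exI[of _ "x # xs"]) auto
  next
    case 2
    with Cons.prems obtain ys zs where
      "xs = ys @ zs" "sum_list (map l ys) \<le> m" "sum_list (map l zs) \<le> n"
      using Cons.IH[of m] by auto
    with 2 show ?thesis by (intro exI[of _ "x # ys"] exI[of _ zs]) auto
  next
    case 3
    with Cons.prems have "sum_list (map l xs) \<le> (m - 1) + n" by auto
    with Cons.prems obtain ys zs where
      "xs = ys @ zs" "sum_list (map l ys) \<le> m - 1" "sum_list (map l zs) \<le> n"
      using Cons.IH[of "m - 1"] by auto
    with 3 show ?thesis by (intro exI[of _ "x # ys"] exI[of _ zs]) auto
  qed
qed

lemma word_ball_add_subset:
  assumes "\<forall>s \<in> S. l s \<le> (1::nat)"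
  shows "word_ball S l (m + n) \<subseteq> (\<lambda>(a, b). a \<circ> b) ` (word_ball S l m \<times> word_ball S l n)"
proof
  fix g assume "g \<in> word_ball S l (m + n)"
  then obtain xs where xs: "xs \<in> lists S" "g = prod_word xs" "sum_list (map l xs) \<le> m + n"
    unfolding word_ball_def by auto
  with assms obtain ys zs where
    yz: "xs = ys @ zs" "sum_list (map l ys) \<le> m" "sum_list (map l zs) \<le> n"
    using split_list_by_weight[of xs l m n] by auto
  with xs have "prod_word ys \<in> word_ball S l m" "prod_word zs \<in> word_ball S l n"
    unfolding word_ball_def by auto
  with xs yz show "g \<in> (\<lambda>(a, b). a \<circ> b) ` (word_ball S l m \<times> word_ball S l n)"
    by (auto intro!: image_eqI[of _ _ "(prod_word ys, prod_word zs)"])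
qed

lemma word_ball_Suc_subset:
  "word_ball S l (Suc n)
     \<subseteq> word_ball S l 0 \<union> (\<lambda>((a, s), b). a \<circ> s \<circ> b) ` ((word_ball S l 0 \<times> S) \<times> word_ball S l n)"
proof
  fix g assume "g \<in> word_ball S l (Suc n)"
  then obtain xs where xs: "xs \<in> lists S" "g = prod_word xs" "sum_list (map l xs) \<le> Suc n"
    unfolding word_ball_def by auto
  show "g \<in> word_ball S l 0 \<union> (\<lambda>((a, s), b). a \<circ> s \<circ> b) ` ((word_ball S l 0 \<times> S) \<times> word_ball S l n)"
  proof (cases "\<exists>x \<in> set xs. l x \<noteq> 0")
    case False
    then have "sum_list (map l xs) = 0" by (simp add: sum_list_eq_0_iff)
    with xs show ?thesis unfolding word_ball_def by auto
  next
    case True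
    then obtain ys x zs where split: "xs = ys @ x # zs" "l x \<noteq> 0" "\<forall>y \<in> set ys. l y = 0"
      using split_list_first_prop[OF True] by blast
    then have "sum_list (map l ys) = 0" by (simp add: sum_list_eq_0_iff)
    with xs split have "prod_word ys \<in> word_ball S l 0" "prod_word zs \<in> word_ball S l n" "x \<in> S"
      unfolding word_ball_def by auto
    moreover have "g = (\<lambda>((a, s), b). a \<circ> s \<circ> b) ((prod_word ys, x), prod_word zs)"
      using xs split by (simp add: comp_assoc)
    ultimately show ?thesis by blast
  qed
qed

lemma finite_word_ball:
  assumes "finite S" "finite (generated {s \<in> S. l s = 0})"
  shows "finite (word_ball S l n)"
proof -
  have ball0: "finite (word_ball S l 0)"
    by (rule finite_subset[OF _ assms(2)]) (auto simp: word_ball_def generated_def)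
  show ?thesis
  proof (induction n)
    case (Suc n)
    with ball0 assms(1) show ?case by (intro finite_subset[OF word_ball_Suc_subset]) auto
  qed (fact ball0)
qed

lemma card_word_ball_add_le:
  assumes "finite S" "finite (generated {s \<in> S. l s = 0})" "\<forall>s \<in> S. l s \<le> (1::nat)"
  shows "card (word_ball S l (m + n)) \<le> card (word_ball S l m) * card (word_ball S l n)"
proof -
  note fin = finite_word_ball[OF assms(1,2)]
  have "card (word_ball S l (m + n))
          \<le> card ((\<lambda>(a, b). a \<circ> b) ` (word_ball S l m \<times> word_ball S l n))"
    by (rule card_mono) (use word_ball_add_subset[OF assms(3)] fin in auto)
  also have "\<dots> \<le> card (word_ball S l m \<times> word_ball S l n)"
    by (rule card_image_le) (use fin in auto)
  finally show ?thesis by (simp add: card_cartesian_product)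
qed

lemma card_word_ball_ge_1:
  assumes "finite S" "finite (generated {s \<in> S. l s = 0})"
  shows "1 \<le> card (word_ball S l n)"
  using id_in_word_ball finite_word_ball[OF assms]
  by (metis Suc_leI card_gt_0_iff empty_iff One_nat_def)

lemma submultiplicative_iterate:
  fixes a :: "nat \<Rightarrow> real"
  assumes ge1: "\<And>n. 1 \<le> a n" and submult: "\<And>m n. a (m + n) \<le> a m * a n"
  shows "a (q * k + r) \<le> a k ^ q * a r"
proof (induction q)
  case (Suc q)
  have "a (Suc q * k + r) = a (k + (q * k + r))" by (simp add: algebra_simps)
  also have "\<dots> \<le> a k * a (q * k + r)" by (rule submult)
  also have "\<dots> \<le> a k * (a k ^ q * a r)"
    using Suc ge1[of k] by (intro mult_left_mono) auto
  finally show ?case by (simp add: algebra_simps)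
qed simp

lemma root_le_of_submultiplicative:
  fixes a :: "nat \<Rightarrow> real"
  assumes ge1: "\<And>n. 1 \<le> a n" and submult: "\<And>m n. a (m + n) \<le> a m * a n"
    and k: "1 \<le> k" and n: "1 \<le> n" and M: "\<And>r. r < k \<Longrightarrow> a r \<le> M" and M1: "1 \<le> M"
  shows "root n (a n) \<le> root k (a k) * root n M"
proof -
  define q where "q = n div k"
  have qk: "real q * real k \<le> real n"
    unfolding q_def by (simp flip: of_nat_mult)
  have "a n \<le> a k ^ q * a (n mod k)"
    using submultiplicative_iterate[OF ge1 submult, of q k "n mod k"] by (simp add: q_def)
  also have "\<dots> \<le> a k ^ q * M"
    using M[of "n mod k"] ge1[of k] k by (intro mult_left_mono) auto
  finally have "root n (a n) \<le> root n (a k ^ q) * root n M"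
    using n by (simp add: real_root_le_mono flip: real_root_mult)
  moreover have "root n (a k ^ q) = a k powr (real q / real n)"
    using n ge1[of k] by (simp add: root_powr_inverse powr_realpow[symmetric] powr_powr)
  moreover have "a k powr (real q / real n) \<le> a k powr (1 / real k)"
    using qk n k ge1[of k] by (intro powr_mono) (auto simp: field_simps)
  moreover have "a k powr (1 / real k) = root k (a k)"
    using k ge1[of k] by (simp add: root_powr_inverse)
  ultimately show ?thesis
    using M1 by (metis mult_right_mono order_trans real_root_ge_zero zero_le_one)
qed

text \<open>Fekete's lemma in multiplicative form; the limit is the infimum of the roots.\<close>

lemma convergent_root_submultiplicative:
  fixes a :: "nat \<Rightarrow> real"
  assumes ge1: "\<And>n. 1 \<le> a n" and submult: "\<And>m n. a (m + n) \<le> a m * a n"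
  shows "convergent (\<lambda>n. root n (a n))"
proof -
  define L where "L = (INF n\<in>{1..}. root n (a n))"
  have bdd: "bdd_below ((\<lambda>n. root n (a n)) ` {1..})"
    using ge1 by (intro bdd_belowI[of _ 1]) auto
  have "(\<lambda>n. root n (a n)) \<longlonglongrightarrow> L"
  proof (rule order_tendstoI)
    fix y assume "y < L"
    moreover have "L \<le> root n (a n)" if "n \<ge> 1" for n
      unfolding L_def by (rule cINF_lower[OF bdd]) (use that in auto)
    ultimately show "eventually (\<lambda>n. y < root n (a n)) sequentially"
      by (auto simp: eventually_sequentially intro: less_le_trans)
  next
    fix y assume "L < y"
    then obtain k where k: "k \<ge> 1" "root k (a k) < y"
      unfolding L_def using cINF_less_iff[OF _ bdd] by auto
    define M where "M = Max (a ` {..<k})"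
    have M: "a r \<le> M" if "r < k" for r
      unfolding M_def using that by auto
    have M1: "1 \<le> M"
      using M[of 0] ge1[of 0] k by auto
    have "(\<lambda>n. root k (a k) * root n M) \<longlonglongrightarrow> root k (a k) * 1"
      using M1 by (intro tendsto_mult tendsto_const LIMSEQ_root_const) auto
    then have ev: "eventually (\<lambda>n. root k (a k) * root n M < y) sequentially"
      using k by (intro order_tendstoD(2)) auto
    have bound: "root n (a n) \<le> root k (a k) * root n M" if "n \<ge> 1" for n
      by (rule root_le_of_submultiplicative[OF ge1 submult k(1) that M M1])
    from ev eventually_ge_at_top[of 1] show "eventually (\<lambda>n. root n (a n) < y) sequentially"
      by eventually_elim (use bound in \<open>meson le_less_trans\<close>)
  qed
  then show ?thesis by (rule convergentI)
qed

lemma exp_bound_of_root_tendsto: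
  fixes f :: "nat \<Rightarrow> real"
  assumes lim: "(\<lambda>n. root n (f n)) \<longlonglongrightarrow> L" and "L < b" "1 \<le> b" and nonneg: "\<And>n. 0 \<le> f n"
  obtains C where "0 < C" "\<And>n. f n \<le> C * b ^ n"
proof -
  obtain N where N: "\<And>n. n \<ge> N \<Longrightarrow> root n (f n) < b"
    using order_tendstoD(2)[OF lim \<open>L < b\<close>] unfolding eventually_sequentially by blast
  define C where "C = max 1 (Max (f ` {..N}))"
  have C_le: "C \<le> C * b ^ n" for n
    using mult_left_mono[OF one_le_power[OF \<open>1 \<le> b\<close>, of n], of C] by (simp add: C_def)
  have "f n \<le> C * b ^ n" for n
  proof (cases "n \<le> N")
    case True
    then have "f n \<le> Max (f ` {..N})" by (intro Max_ge) auto
    then show ?thesis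
      using C_le[of n] unfolding C_def by linarith
  next
    case False
    then have "f n = root n (f n) ^ n"
      using nonneg[of n] by simp
    also have "\<dots> \<le> b ^ n"
      using N[of n] False nonneg[of n] by (intro power_mono) auto
    also have "\<dots> \<le> C * b ^ n"
      using C_le[of n] \<open>1 \<le> b\<close> by (simp add: C_def)
    finally show ?thesis .
  qed
  moreover have "0 < C" by (simp add: C_def)
  ultimately show ?thesis using that by blast
qed

lemma root_Suc_tendsto_1: "(\<lambda>n. root n (real (n + 1))) \<longlonglongrightarrow> 1"
proof -
  have "(\<lambda>n::nat. (real n + 1) powr (1 / real n)) \<longlonglongrightarrow> 1" by real_asymp
  moreover have "eventually (\<lambda>n. (real n + 1) powr (1 / real n) = root n (real (n + 1))) sequentially"
    unfolding eventually_sequentially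
    by (intro exI[of _ 1]) (auto simp: root_powr_inverse add.commute)
  ultimately show ?thesis by (rule Lim_transform_eventually)
qed

lemma root_limit_le_of_poly_exp_bound:
  fixes f :: "nat \<Rightarrow> real"
  assumes lim: "(\<lambda>n. root n (f n)) \<longlonglongrightarrow> L" and "0 < K" "0 \<le> b"
    and nonneg: "\<And>n. 0 \<le> f n" and bound: "\<And>n. f n \<le> K * real (n + 1) ^ k * b ^ n"
  shows "L \<le> b"
proof -
  define u where "u n = root n K * root n (real (n + 1)) ^ k * b" for n
  have "u \<longlonglongrightarrow> 1 * 1 ^ k * b"
    unfolding u_def using \<open>0 < K\<close>
    by (intro tendsto_mult tendsto_power tendsto_const LIMSEQ_root_const root_Suc_tendsto_1)
  moreover have "root n (f n) \<le> u n" if "n \<ge> 1" for n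
  proof -
    have "root n (f n) \<le> root n (K * real (n + 1) ^ k * b ^ n)"
      using bound that by (intro real_root_le_mono) auto
    also have "\<dots> = u n"
      unfolding u_def using that \<open>0 \<le> b\<close>
      by (simp add: real_root_mult real_root_power real_root_power_cancel)
    finally show ?thesis .
  qed
  ultimately show ?thesis
    using LIMSEQ_le[OF lim] by (metis eventually_sequentially mult_1 power_one)
qed

lemma tree_aut_outside: "tree_aut d f \<Longrightarrow> w \<notin> tree_vertices d \<Longrightarrow> f w = w"
  unfolding tree_aut_def by blast

lemma tree_aut_root: "tree_aut d f \<Longrightarrow> f [] = []"
  unfolding tree_aut_def by blast

lemma tree_aut_bij_betw: "tree_aut d f \<Longrightarrow> bij_betw f (tree_vertices d) (tree_vertices d)"
  unfolding tree_aut_def by blast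

lemma tree_aut_child:
  "tree_aut d f \<Longrightarrow> w \<in> tree_vertices d \<Longrightarrow> a < d \<Longrightarrow> \<exists>b<d. f (w @ [a]) = f w @ [b]"
  unfolding tree_aut_def by blast

lemma tree_aut_id: "tree_aut d id"
  unfolding tree_aut_def by (simp add: bij_betw_id)

lemma tree_aut_comp:
  assumes f: "tree_aut d f" and g: "tree_aut d g"
  shows "tree_aut d (f \<circ> g)"
proof -
  have bij_g: "bij_betw g (tree_vertices d) (tree_vertices d)"
    using g by (rule tree_aut_bij_betw)
  have "\<exists>b<d. (f \<circ> g) (w @ [a]) = (f \<circ> g) w @ [b]" if w: "w \<in> tree_vertices d" and a: "a < d" for w a
  proof -
    obtain c where c: "c < d" "g (w @ [a]) = g w @ [c]"
      using tree_aut_child[OF g w a] by blast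
    have "g w \<in> tree_vertices d"
      using bij_g w by (rule bij_betw_apply)
    with c show ?thesis
      using tree_aut_child[OF f] by fastforce
  qed
  with f g bij_g show ?thesis
    unfolding tree_aut_def by (auto intro: bij_betw_trans)
qed

lemma tree_aut_prod_word: "set xs \<subseteq> {f. tree_aut d f} \<Longrightarrow> tree_aut d (prod_word xs)"
  by (induction xs) (auto intro: tree_aut_id tree_aut_comp)

lemma tree_aut_generated: "S \<subseteq> {f. tree_aut d f} \<Longrightarrow> g \<in> generated S \<Longrightarrow> tree_aut d g"
  unfolding generated_def by (auto intro!: tree_aut_prod_word)

lemma tree_aut_level_one:
  assumes "tree_aut d f" "x < d"
  obtains b where "b < d" "f [x] = [b]"
  using tree_aut_child[OF assms(1) _ assms(2), of "[]"] tree_aut_root[OF assms(1)] that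
  by (auto simp: tree_vertices_def)

lemma tree_aut_prefix:
  assumes f: "tree_aut d f" and x: "x < d" and w: "w \<in> tree_vertices d"
  shows "\<exists>r. f (x # w) = f [x] @ r"
  using w
proof (induction w rule: rev_induct)
  case (snoc a w)
  then have "w \<in> tree_vertices d" "a < d" "x # w \<in> tree_vertices d"
    using x by (auto simp: tree_vertices_def)
  with snoc.IH obtain r b where "f (x # w) = f [x] @ r" "f ((x # w) @ [a]) = f (x # w) @ [b]"
    using tree_aut_child[OF f] by blast
  then show ?case by auto
qed simp

lemma tree_aut_eqI:
  assumes f: "tree_aut d f" and g: "tree_aut d g"
    and level: "\<And>x. x < d \<Longrightarrow> f [x] = g [x]"
    and sections: "\<And>x. x < d \<Longrightarrow> aut_section d f x = aut_section d g x"
  shows "f = g"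
proof
  fix v
  show "f v = g v"
  proof (cases "v \<in> tree_vertices d")
    case False
    then show ?thesis using tree_aut_outside[OF f] tree_aut_outside[OF g] by simp
  next
    case True
    show ?thesis
    proof (cases v)
      case Nil
      then show ?thesis using tree_aut_root[OF f] tree_aut_root[OF g] by simp
    next
      case (Cons x w)
      with True have x: "x < d" and w: "w \<in> tree_vertices d"
        by (auto simp: tree_vertices_def)
      obtain b where b: "f [x] = [b]" "g [x] = [b]"
        using tree_aut_level_one[OF f x] level[OF x] by metis
      have "tl (f (x # w)) = tl (g (x # w))"
        using fun_cong[OF sections[OF x], of w] w by (simp add: aut_section_def)
      moreover have "hd (f (x # w)) = hd (g (x # w))"
        using tree_aut_prefix[OF f x w] tree_aut_prefix[OF g x w] b by auto
      moreover have "f (x # w) \<noteq> []" "g (x # w) \<noteq> []"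
        using tree_aut_prefix[OF f x w] tree_aut_prefix[OF g x w] b by auto
      ultimately show ?thesis
        using Cons by (metis list.collapse)
    qed
  qed
qed

text \<open>Each tuple of total weight at most \<open>n\<close> contributes at least \<open>1\<close> to
  \<open>a\<^sup>n \<Prod>\<^sub>i a\<^bsup>-w(t i)\<^esup>\<close>, and summing this over all tuples factorises.\<close>

lemma card_weighted_tuples_le:
  fixes w :: "'a \<Rightarrow> nat" and a :: real
  assumes fin: "finite A" and a: "1 \<le> a"
  shows "real (card {t \<in> PiE {..<k} (\<lambda>_. A). (\<Sum>i<k. w (t i)) \<le> n})
           \<le> a ^ n * (\<Sum>h\<in>A. (1 / a) ^ w h) ^ k"
proof -
  define P where "P = PiE {..<k} (\<lambda>_. A)"
  define T where "T = {t \<in> P. (\<Sum>i<k. w (t i)) \<le> n}"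
  have fin_P: "finite P"
    unfolding P_def using fin by (intro finite_PiE) auto
  have "real (card T) = (\<Sum>t\<in>T. 1)" by simp
  also have "\<dots> \<le> (\<Sum>t\<in>T. a ^ n * (\<Prod>i<k. (1 / a) ^ w (t i)))"
  proof (rule sum_mono)
    fix t assume "t \<in> T"
    define s where "s = (\<Sum>i<k. w (t i))"
    have "a ^ s \<le> a ^ n"
      using \<open>t \<in> T\<close> a unfolding T_def s_def by (intro power_increasing) auto
    moreover have "(\<Prod>i<k. (1 / a) ^ w (t i)) = 1 / a ^ s"
      unfolding s_def by (simp add: power_sum power_one_over prod_dividef)
    moreover have "0 < a ^ s"
      using a by simp
    ultimately show "1 \<le> a ^ n * (\<Prod>i<k. (1 / a) ^ w (t i))"
      by (simp add: field_simps)
  qed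
  also have "\<dots> \<le> (\<Sum>t\<in>P. a ^ n * (\<Prod>i<k. (1 / a) ^ w (t i)))"
    using fin_P a by (intro sum_mono2) (auto simp: T_def intro!: mult_nonneg_nonneg prod_nonneg)
  also have "\<dots> = a ^ n * (\<Sum>t\<in>P. \<Prod>i<k. (1 / a) ^ w (t i))"
    by (simp add: sum_distrib_left)
  also have "(\<Sum>t\<in>P. \<Prod>i<k. (1 / a) ^ w (t i)) = (\<Prod>i<k. \<Sum>h\<in>A. (1 / a) ^ w h)"
    unfolding P_def using fin by (intro prod_sum_PiE[symmetric]) auto
  finally show ?thesis
    by (simp add: T_def P_def)
qed

lemma sum_inverse_powers_le:
  fixes w :: "'a \<Rightarrow> nat" and a C :: real
  assumes fin: "finite A" and a: "0 < a" and bounded: "\<And>h. h \<in> A \<Longrightarrow> w h \<le> n"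
    and level_card: "\<And>m. real (card {h \<in> A. w h = m}) \<le> C * a ^ m"
  shows "(\<Sum>h\<in>A. (1 / a) ^ w h) \<le> real (n + 1) * C"
proof -
  have "(\<Sum>h\<in>A. (1 / a) ^ w h) = (\<Sum>m\<le>n. \<Sum>h\<in>{h \<in> A. w h = m}. (1 / a) ^ w h)"
    using bounded by (intro sum.group[symmetric] fin) auto
  also have "\<dots> = (\<Sum>m\<le>n. real (card {h \<in> A. w h = m}) * (1 / a) ^ m)"
    by (intro sum.cong) auto
  also have "\<dots> \<le> (\<Sum>m\<le>n. C * a ^ m * (1 / a) ^ m)"
    using a by (intro sum_mono mult_right_mono level_card) auto
  also have "\<dots> = real (n + 1) * C"
    using a by (simp add: power_one_over)
  finally show ?thesis .
qed

definition non_l1_expanding_sections ::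
  "nat \<Rightarrow> (nat list \<Rightarrow> nat list) set \<Rightarrow> ((nat list \<Rightarrow> nat list) \<Rightarrow> nat)
     \<Rightarrow> (nat list \<Rightarrow> nat list) set \<Rightarrow> ((nat list \<Rightarrow> nat list) \<Rightarrow> nat) \<Rightarrow> bool" where
  "non_l1_expanding_sections d S l S' l' \<longleftrightarrow>
     (\<forall>g \<in> generated S. (\<forall>x < d. aut_section d g x \<in> generated S') \<and>
        (\<Sum>x<d. word_pnorm S' l' (aut_section d g x)) \<le> word_pnorm S l g)"

lemma card_word_ball_le_sections:
  assumes aut: "S \<subseteq> {f. tree_aut d f}" and sections: "non_l1_expanding_sections d S l S' l'"
    and fin: "finite (word_ball S' l' n)"
  shows "card (word_ball S l n)
           \<le> d ^ d * card {t \<in> PiE {..<d} (\<lambda>_. word_ball S' l' n).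
                            (\<Sum>x<d. word_pnorm S' l' (t x)) \<le> n}"
proof -
  define T where
    "T = {t \<in> PiE {..<d} (\<lambda>_. word_ball S' l' n). (\<Sum>x<d. word_pnorm S' l' (t x)) \<le> n}"
  define \<Phi> where
    "\<Phi> g = (restrict (\<lambda>x. hd (g [x])) {..<d}, restrict (aut_section d g) {..<d})" for g
  have aut_ball: "tree_aut d g" if "g \<in> word_ball S l n" for g
    using tree_aut_generated[OF aut] word_ball_subset_generated that by blast
  have level_one: "hd (g [x]) < d" if g: "g \<in> word_ball S l n" and x: "x < d" for g x
  proof -
    obtain b where "b < d" "g [x] = [b]"
      using tree_aut_level_one[OF aut_ball[OF g] x] by blast
    then show ?thesis by simp
  qed
  have "\<Phi> g \<in> PiE {..<d} (\<lambda>_. {..<d}) \<times> T" if g: "g \<in> word_ball S l n" for g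
  proof -
    have g_gen: "g \<in> generated S" and g_norm: "word_pnorm S l g \<le> n"
      using g word_ball_eq[of S l n] by auto
    have sections_gen: "\<forall>x<d. aut_section d g x \<in> generated S'"
      and sum_le: "(\<Sum>x<d. word_pnorm S' l' (aut_section d g x)) \<le> n"
      using sections g_gen g_norm unfolding non_l1_expanding_sections_def by auto
    have "aut_section d g x \<in> word_ball S' l' n" if "x < d" for x
    proof -
      have "word_pnorm S' l' (aut_section d g x) \<le> (\<Sum>x<d. word_pnorm S' l' (aut_section d g x))"
        using that by (intro member_le_sum) auto
      then show ?thesis
        using sum_le sections_gen that word_ball_eq[of S' l' n] by auto
    qed
    with sum_le level_one[OF g] show ?thesis
      unfolding \<Phi>_def T_def by auto
  qed
  then have "\<Phi> ` word_ball S l n \<subseteq> PiE {..<d} (\<lambda>_. {..<d}) \<times> T"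
    by blast
  moreover have "inj_on \<Phi> (word_ball S l n)"
  proof (rule inj_onI)
    fix f g assume f: "f \<in> word_ball S l n" and g: "g \<in> word_ball S l n" and eq: "\<Phi> f = \<Phi> g"
    show "f = g"
    proof (rule tree_aut_eqI[OF aut_ball[OF f] aut_ball[OF g]])
      fix x assume x: "x < d"
      show "aut_section d f x = aut_section d g x"
        using fun_cong[OF arg_cong[OF eq, of snd], of x] x by (simp add: \<Phi>_def)
      have "hd (f [x]) = hd (g [x])"
        using fun_cong[OF arg_cong[OF eq, of fst], of x] x by (simp add: \<Phi>_def)
      moreover obtain b where "f [x] = [b]"
        using tree_aut_level_one[OF aut_ball[OF f] x] by blast
      moreover obtain c where "g [x] = [c]"
        using tree_aut_level_one[OF aut_ball[OF g] x] by blast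
      ultimately show "f [x] = g [x]"
        by simp
    qed
  qed
  moreover have "finite T"
  proof -
    have "finite (PiE {..<d} (\<lambda>_. word_ball S' l' n))"
      using fin by (intro finite_PiE) auto
    then show ?thesis
      unfolding T_def by simp
  qed
  ultimately have "card (word_ball S l n) \<le> card (PiE {..<d} (\<lambda>_. {..<d}) \<times> T)"
    by (intro card_inj_on_le) (auto intro: finite_PiE)
  then show ?thesis
    by (simp add: card_cartesian_product card_PiE T_def)
qed

lemma convergent_root_card_word_ball:
  assumes "finite S" "finite (generated {s \<in> S. l s = 0})" "\<forall>s \<in> S. l s \<le> (1::nat)"
  shows "convergent (\<lambda>n. root n (real (card (word_ball S l n))))"
proof (rule convergent_root_submultiplicative)
  show "1 \<le> real (card (word_ball S l n))" for n
    using card_word_ball_ge_1[OF assms(1,2)] by simp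
  show "real (card (word_ball S l (m + n)))
          \<le> real (card (word_ball S l m)) * real (card (word_ball S l n))" for m n
    using card_word_ball_add_le[OF assms] by (simp flip: of_nat_mult)
qed

lemma card_word_ball_le_poly_exp:
  assumes fin': "finite S'" "finite (generated {s \<in> S'. l' s = 0})"
    and aut: "S \<subseteq> {f. tree_aut d f}" and sections: "non_l1_expanding_sections d S l S' l'"
    and b: "1 \<le> b" and growth': "\<And>m. real (card (word_ball S' l' m)) \<le> C * b ^ m"
  shows "real (card (word_ball S l n)) \<le> (real d ^ d * C ^ d) * real (n + 1) ^ d * b ^ n"
proof -
  note fin_ball' = finite_word_ball[OF fin']
  have level_card: "real (card {h \<in> word_ball S' l' n. word_pnorm S' l' h = m}) \<le> C * b ^ m" for m
  proof -
    have "{h \<in> word_ball S' l' n. word_pnorm S' l' h = m} \<subseteq> word_ball S' l' m"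
      using word_ball_eq[of S' l'] by blast
    then have "card {h \<in> word_ball S' l' n. word_pnorm S' l' h = m} \<le> card (word_ball S' l' m)"
      by (intro card_mono fin_ball')
    then show ?thesis
      using growth'[of m] by linarith
  qed
  have weights: "(\<Sum>h\<in>word_ball S' l' n. (1 / b) ^ word_pnorm S' l' h) \<le> real (n + 1) * C"
    using b word_pnorm_le_if_in_word_ball level_card
    by (intro sum_inverse_powers_le fin_ball') auto
  have "real (card (word_ball S l n))
          \<le> real d ^ d * real (card {t \<in> PiE {..<d} (\<lambda>_. word_ball S' l' n).
                                        (\<Sum>x<d. word_pnorm S' l' (t x)) \<le> n})"
    using card_word_ball_le_sections[OF aut sections fin_ball'] by (simp flip: of_nat_mult of_nat_power)
  also have "\<dots> \<le> real d ^ d * (b ^ n * (\<Sum>h\<in>word_ball S' l' n. (1 / b) ^ word_pnorm S' l' h) ^ d)"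
    using card_weighted_tuples_le[OF fin_ball' b] by (intro mult_left_mono) auto
  also have "\<dots> \<le> real d ^ d * (b ^ n * (real (n + 1) * C) ^ d)"
    using b weights by (intro mult_left_mono power_mono sum_nonneg) auto
  finally show ?thesis
    by (simp add: power_mult_distrib mult_ac)
qed

lemma lim_root_card_word_ball_mono:
  assumes fin: "finite S" "finite (generated {s \<in> S. l s = 0})" "\<forall>s \<in> S. l s \<le> (1::nat)"
    and fin': "finite S'" "finite (generated {s \<in> S'. l' s = 0})" "\<forall>s \<in> S'. l' s \<le> (1::nat)"
    and aut: "S \<subseteq> {f. tree_aut d f}" and sections: "non_l1_expanding_sections d S l S' l'"
  shows "lim (\<lambda>n. root n (real (card (word_ball S l n))))
           \<le> lim (\<lambda>n. root n (real (card (word_ball S' l' n))))"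
    (is "?L \<le> ?L'")
proof (rule dense_ge)
  fix b assume "?L' < b"
  have lim: "(\<lambda>n. root n (real (card (word_ball S l n)))) \<longlonglongrightarrow> ?L"
    and lim': "(\<lambda>n. root n (real (card (word_ball S' l' n)))) \<longlonglongrightarrow> ?L'"
    using convergent_root_card_word_ball[OF fin] convergent_root_card_word_ball[OF fin']
    by (simp_all add: convergent_LIMSEQ_iff)
  have ge_1: "1 \<le> real (card (word_ball S' l' n))" for n
    using card_word_ball_ge_1[OF fin'(1,2)] by simp
  then have nonneg: "0 \<le> real (card (word_ball S' l' n))" for n
    by (rule order.trans[OF zero_le_one])
  have "1 \<le> ?L'"
    using ge_1 by (intro LIMSEQ_le_const[OF lim'] exI[of _ 1]) auto
  with \<open>?L' < b\<close> have b: "1 \<le> b" by simp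
  obtain C where C: "0 < C" "\<And>m. real (card (word_ball S' l' m)) \<le> C * b ^ m"
    using exp_bound_of_root_tendsto[OF lim' \<open>?L' < b\<close> b nonneg] by blast
  have "0 < real d ^ d * C ^ d"
    using C(1) by (cases d) auto
  then show "?L \<le> b"
    using b card_word_ball_le_poly_exp[OF fin'(1,2) aut sections b C(2)]
    by (intro root_limit_le_of_poly_exp_bound[OF lim]) auto
qed

lemma exp_growth_rate_eq_lim_word_ball:
  "G \<nu> = generated (S \<nu>) \<Longrightarrow>
     exp_growth_rate G S l \<nu> = lim (\<lambda>n. root n (real (card (word_ball (S \<nu>) (l \<nu>) n))))"
  unfolding exp_growth_rate_def growth_fun_def by (simp add: word_ball_eq)

lemma non_l1_expanding_similar_familyD:
  assumes "non_l1_expanding_similar_family d G S l"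
  shows "finite (S \<nu>)" "S \<nu> \<subseteq> {f. tree_aut d f}" "G \<nu> = generated (S \<nu>)"
    "\<forall>s \<in> S \<nu>. l \<nu> s \<le> 1" "finite (generated {s \<in> S \<nu>. l \<nu> s = 0})"
    "non_l1_expanding_sections d (S \<nu>) (l \<nu>) (S (Suc \<nu>)) (l (Suc \<nu>))"
proof -
  note family = assms[unfolded non_l1_expanding_similar_family_def, rule_format]
  show "finite (S \<nu>)" "S \<nu> \<subseteq> {f. tree_aut d f}" "G \<nu> = generated (S \<nu>)" "\<forall>s \<in> S \<nu>. l \<nu> s \<le> 1"
    using family[of \<nu>] by auto
  have "generated {s \<in> S \<nu>. l \<nu> s = 0} \<subseteq> subgroup_gen d {s \<in> S \<nu>. l \<nu> s = 0}"
    unfolding subgroup_gen_def by (rule generated_mono) auto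
  then show "finite (generated {s \<in> S \<nu>. l \<nu> s = 0})"
    using family[of \<nu>] finite_subset by blast
  show "non_l1_expanding_sections d (S \<nu>) (l \<nu>) (S (Suc \<nu>)) (l (Suc \<nu>))"
    using family[of \<nu>] family[of "Suc \<nu>"] unfolding non_l1_expanding_sections_def by auto
qed

theorem mainTheorem5:
  fixes d :: nat
    and G S :: "nat \<Rightarrow> (nat list \<Rightarrow> nat list) set"
    and l :: "nat \<Rightarrow> (nat list \<Rightarrow> nat list) \<Rightarrow> nat"
  assumes "d \<ge> 2"
    and "non_l1_expanding_similar_family d G S l"
  shows "\<forall>\<nu>. exp_growth_rate G S l \<nu> \<le> exp_growth_rate G S l (Suc \<nu>)"
proof
  fix \<nu>
  note family = non_l1_expanding_similar_familyD[OF assms(2)]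
  show "exp_growth_rate G S l \<nu> \<le> exp_growth_rate G S l (Suc \<nu>)"
    unfolding exp_growth_rate_eq_lim_word_ball[OF family(3)]
    by (rule lim_root_card_word_ball_mono[OF family(1,5,4) family(1,5,4) family(2,6)])
qed

end
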